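(* Let $\mathcal L$ be a non-trivial geometric lattice, let $(\mathcal E_1,\iota_1)$ and $(\mathcal E_2,\iota_2)$ be modular extensions of $\mathcal L$, and let $F$ be a flat of $\mathcal E_1$ with $F\ge F_{\iota_1}$. If $F$ is modular in $\mathcal E_1$, then $(F,\hat1_{\mathcal E_2})$ is a modular flat of the pushout $\mathcal E_1\cup_{\mathcal L}\mathcal E_2$.
   Context: A geometric lattice is a finite lattice (bottom $\hat0$, top $\hat1$, join $\vee$, meet $\wedge$) which is ranked (rank function $\mathrm{rk}$), atomic and semimodular ($\mathrm{rk}(F_1\wedge F_2)+\mathrm{rk}(F_1\vee F_2)\le\mathrm{rk}(F_1)+\mathrm{rk}(F_2)$); its elements are called flats, and it is non-trivial if it has at least two elements. A flat $F$ is modular if $\mathrm{rk}(F\wedge F')+\mathrm{rk}(F\vee F')=\mathrm{rk}(F)+\mathrm{rk}(F')$ for every flat $F'$. An embedding of geometric lattices is an injective order-preserving map preserving joins and sending atoms to atoms. A modular extension of $\mathcal L$ is a pair $(\mathcal E,\iota)$ with $\mathcal E$ a geometric lattice and $\iota:\mathcal L\to\mathcal E$ an embedding whose image is an interval $[\hat0,F_\iota]$ with $F_\iota$ modular in $\mathcal E$. The pushout $\mathcal E_1\cup_{\mathcal L}\mathcal E_2$ of two modular extensions is the subposet of $\mathcal E_1\times\mathcal E_2$ consisting of the pairs $(F_1,F_2)$ with $\iota_1^{-1}(F_1\wedge F_{\iota_1})=\iota_2^{-1}(F_2\wedge F_{\iota_2})$; it is a geometric lattice with rank $\mathrm{rk}(F_1,F_2)=\mathrm{rk}_{\mathcal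 E_1}(F_1)+\mathrm{rk}_{\mathcal E_2}(F_2)-\mathrm{rk}_{\mathcal L}(\iota_1^{-1}(F_1\wedge F_{\iota_1}))$. *)

theory Defs
  imports Main
begin

type_synonym 'a poset = "'a set \<times> ('a \<Rightarrow> 'a \<Rightarrow> bool)"

definition car :: "'a poset \<Rightarrow> 'a set" where "car P = fst P"
definition leq :: "'a poset \<Rightarrow> 'a \<Rightarrow> 'a \<Rightarrow> bool" where "leq P = snd P"

definition partial_order_on' :: "'a poset \<Rightarrow> bool" where
  "partial_order_on' P \<longleftrightarrow>
     (\<forall>x\<in>car P. leq P x x) \<and>
     (\<forall>x\<in>car P. \<forall>y\<in>car P. leq P x y \<and> leq P y x \<longrightarrow> x = y) \<and>
     (\<forall>x\<in>car P. \<forall>y\<in>car P. \<forall>z\<in>car P. leq P x y \<and> leq P y z \<longrightarrow> leq P x z)"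

definition is_lub :: "'a poset \<Rightarrow> 'a set \<Rightarrow> 'a \<Rightarrow> bool" where
  "is_lub P A c \<longleftrightarrow> c \<in> car P \<and> (\<forall>a\<in>A. leq P a c) \<and>
     (\<forall>d\<in>car P. (\<forall>a\<in>A. leq P a d) \<longrightarrow> leq P c d)"

definition is_glb :: "'a poset \<Rightarrow> 'a set \<Rightarrow> 'a \<Rightarrow> bool" where
  "is_glb P A c \<longleftrightarrow> c \<in> car P \<and> (\<forall>a\<in>A. leq P c a) \<and>
     (\<forall>d\<in>car P. (\<forall>a\<in>A. leq P d a) \<longrightarrow> leq P d c)"

definition join :: "'a poset \<Rightarrow> 'a \<Rightarrow> 'a \<Rightarrow> 'a" where
  "join P x y = (THE c. is_lub P {x, y} c)"

definition meet :: "'a poset \<Rightarrow> 'a \<Rightarrow> 'a \<Rightarrow> 'a" where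
  "meet P x y = (THE c. is_glb P {x, y} c)"

definition finite_lattice :: "'a poset \<Rightarrow> bool" where
  "finite_lattice P \<longleftrightarrow> finite (car P) \<and> car P \<noteq> {} \<and> partial_order_on' P \<and>
     (\<forall>x\<in>car P. \<forall>y\<in>car P. (\<exists>c. is_lub P {x, y} c) \<and> (\<exists>c. is_glb P {x, y} c))"

definition bot :: "'a poset \<Rightarrow> 'a" where
  "bot P = (THE b. b \<in> car P \<and> (\<forall>x\<in>car P. leq P b x))"

definition top :: "'a poset \<Rightarrow> 'a" where
  "top P = (THE t. t \<in> car P \<and> (\<forall>x\<in>car P. leq P x t))"

definition covers :: "'a poset \<Rightarrow> 'a \<Rightarrow> 'a \<Rightarrow> bool" where
  "covers P x y \<longleftrightarrow> x \<in> car P \<and> y \<in> car P \<and> leq P x y \<and> x \<noteq> y \<and>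
     \<not> (\<exists>z\<in>car P. leq P x z \<and> leq P z y \<and> z \<noteq> x \<and> z \<noteq> y)"

definition is_chain :: "'a poset \<Rightarrow> 'a set \<Rightarrow> bool" where
  "is_chain P C \<longleftrightarrow> C \<subseteq> car P \<and> (\<forall>a\<in>C. \<forall>b\<in>C. leq P a b \<or> leq P b a)"

definition rk :: "'a poset \<Rightarrow> 'a \<Rightarrow> nat" where
  "rk P x = Max {card C | C. is_chain P C \<and> (\<forall>c\<in>C. leq P c x)} - 1"

definition ranked :: "'a poset \<Rightarrow> bool" where
  "ranked P \<longleftrightarrow> rk P (bot P) = 0 \<and>
     (\<forall>x y. covers P x y \<longrightarrow> rk P y = rk P x + 1)"

definition atoms :: "'a poset \<Rightarrow> 'a set" where
  "atoms P = {a. covers P (bot P) a}"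

definition atomic :: "'a poset \<Rightarrow> bool" where
  "atomic P \<longleftrightarrow> (\<forall>x\<in>car P. is_lub P {a \<in> atoms P. leq P a x} x)"

definition semimodular :: "'a poset \<Rightarrow> bool" where
  "semimodular P \<longleftrightarrow> (\<forall>x\<in>car P. \<forall>y\<in>car P.
     rk P (meet P x y) + rk P (join P x y) \<le> rk P x + rk P y)"

definition geometric_lattice :: "'a poset \<Rightarrow> bool" where
  "geometric_lattice P \<longleftrightarrow> finite_lattice P \<and> ranked P \<and> atomic P \<and> semimodular P"

definition nontrivial :: "'a poset \<Rightarrow> bool" where
  "nontrivial P \<longleftrightarrow> card (car P) \<ge> 2"

definition modular_flat :: "'a poset \<Rightarrow> 'a \<Rightarrow> bool" where
  "modular_flat P F \<longleftrightarrow> F \<in> car P \<and> (\<forall>G\<in>car P.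
     rk P (meet P F G) + rk P (join P F G) = rk P F + rk P G)"

definition embedding :: "'l poset \<Rightarrow> 'a poset \<Rightarrow> ('l \<Rightarrow> 'a) \<Rightarrow> bool" where
  "embedding L E \<iota> \<longleftrightarrow> \<iota> ` car L \<subseteq> car E \<and> inj_on \<iota> (car L) \<and>
     (\<forall>x\<in>car L. \<forall>y\<in>car L. leq L x y \<longrightarrow> leq E (\<iota> x) (\<iota> y)) \<and>
     (\<forall>x\<in>car L. \<forall>y\<in>car L. \<iota> (join L x y) = join E (\<iota> x) (\<iota> y)) \<and>
     \<iota> ` atoms L \<subseteq> atoms E"

definition Fi :: "'l poset \<Rightarrow> ('l \<Rightarrow> 'a) \<Rightarrow> 'a" where
  "Fi L \<iota> = \<iota> (top L)"

definition modular_extension :: "'l poset \<Rightarrow> 'a poset \<Rightarrow> ('l \<Rightarrow> 'a) \<Rightarrow> bool" where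
  "modular_extension L E \<iota> \<longleftrightarrow> geometric_lattice E \<and> embedding L E \<iota> \<and>
     (\<exists>F\<in>car E. \<iota> ` car L = {G \<in> car E. leq E (bot E) G \<and> leq E G F} \<and> modular_flat E F)"

definition pushout :: "'l poset \<Rightarrow> 'a poset \<Rightarrow> ('l \<Rightarrow> 'a) \<Rightarrow> 'b poset \<Rightarrow> ('l \<Rightarrow> 'b)
    \<Rightarrow> ('a \<times> 'b) poset" where
  "pushout L E1 \<iota>1 E2 \<iota>2 =
    ({(F1, F2). F1 \<in> car E1 \<and> F2 \<in> car E2 \<and>
        inv_into (car L) \<iota>1 (meet E1 F1 (Fi L \<iota>1)) = inv_into (car L) \<iota>2 (meet E2 F2 (Fi L \<iota>2))},
     (\<lambda>(F1, F2) (G1, G2). leq E1 F1 G1 \<and> leq E2 F2 G2))"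

end

theory Submission
  imports Defs
begin

text \<open>
  The rank of a flat \<open>(A, B)\<close> of the pushout is \<open>rk A - rk (A \<and> F\<^sub>\<iota>\<^sub>1) + rk B\<close>. This
  function is strictly monotone on the pushout (because \<open>F\<^sub>\<iota>\<^sub>1\<close> is modular, its first part
  equals \<open>rk (A \<or> F\<^sub>\<iota>\<^sub>1) - rk F\<^sub>\<iota>\<^sub>1\<close>), which bounds the rank from above; a chain of
  the same length climbs the diagonal \<open>(\<iota>\<^sub>1 l, \<iota>\<^sub>2 l)\<close> up to the common trace of \<open>A\<close> and \<open>B\<close>
  and then the two fibres. For \<open>F \<ge> F\<^sub>\<iota>\<^sub>1\<close> the meet and join of \<open>(F, \<one>)\<close> with \<open>(G\<^sub>1, G\<^sub>2)\<close>
  are \<open>(F \<and> G\<^sub>1, G\<^sub>2)\<close> and \<open>(F \<or> G\<^sub>1, \<one>)\<close>, and the rank formula turns the modular equation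
  for \<open>(F, \<one>)\<close> in the pushout into the modular equation for \<open>F\<close> in \<open>E\<^sub>1\<close>.
\<close>

lemma leq_refl: "partial_order_on' P \<Longrightarrow> x \<in> car P \<Longrightarrow> leq P x x"
  unfolding partial_order_on'_def by blast

lemma leq_antisym:
  "partial_order_on' P \<Longrightarrow> x \<in> car P \<Longrightarrow> y \<in> car P \<Longrightarrow> leq P x y \<Longrightarrow> leq P y x \<Longrightarrow> x = y"
  unfolding partial_order_on'_def by blast

lemma leq_trans:
  "partial_order_on' P \<Longrightarrow> x \<in> car P \<Longrightarrow> y \<in> car P \<Longrightarrow> z \<in> car P \<Longrightarrow>
    leq P x y \<Longrightarrow> leq P y z \<Longrightarrow> leq P x z"
  unfolding partial_order_on'_def by blast

lemma finite_lattice_partial_order: "finite_lattice P \<Longrightarrow> partial_order_on' P"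
  by (simp add: finite_lattice_def)

lemma finite_lattice_finite: "finite_lattice P \<Longrightarrow> finite (car P)"
  by (simp add: finite_lattice_def)

lemma meet_eqI:
  assumes "partial_order_on' P" "is_glb P {x, y} c"
  shows "meet P x y = c"
  unfolding meet_def
proof (rule the_equality)
  show "c' = c" if "is_glb P {x, y} c'" for c'
    using that assms leq_antisym[of P c' c] unfolding is_glb_def by blast
qed (fact assms(2))

lemma join_eqI:
  assumes "partial_order_on' P" "is_lub P {x, y} c"
  shows "join P x y = c"
  unfolding join_def
proof (rule the_equality)
  show "c' = c" if "is_lub P {x, y} c'" for c'
    using that assms leq_antisym[of P c' c] unfolding is_lub_def by blast
qed (fact assms(2))

lemma meet_comm: "meet P x y = meet P y x"
  unfolding meet_def by (simp add: insert_commute)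

subsection \<open>Rank in a finite poset\<close>

lemma finite_chain_cards:
  "finite (car P) \<Longrightarrow> finite {card C | C. is_chain P C \<and> (\<forall>c\<in>C. leq P c x)}"
  by (rule finite_subset[of _ "card ` Pow (car P)"]) (auto simp: is_chain_def)

lemma is_chain_Un:
  "is_chain P C \<Longrightarrow> is_chain P D \<Longrightarrow> \<forall>c\<in>C. \<forall>d\<in>D. leq P c d \<Longrightarrow> is_chain P (C \<union> D)"
  unfolding is_chain_def by blast

lemma is_chain_image:
  assumes "is_chain Q C" "f ` C \<subseteq> car P"
    and "\<And>c c'. c \<in> C \<Longrightarrow> c' \<in> C \<Longrightarrow> leq Q c c' \<Longrightarrow> leq P (f c) (f c')"
  shows "is_chain P (f ` C)"
  using assms unfolding is_chain_def by blast

lemma card_chain_le_rk: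
  assumes "finite (car P)" "is_chain P C" "\<forall>c\<in>C. leq P c x"
  shows "card C \<le> rk P x + 1"
proof -
  have "card C \<le> Max {card C | C. is_chain P C \<and> (\<forall>c\<in>C. leq P c x)}"
    using assms by (intro Max_ge[OF finite_chain_cards]) auto
  then show ?thesis unfolding rk_def by linarith
qed

lemma ex_chain_card_rk:
  assumes fin: "finite (car P)" and po: "partial_order_on' P" and x: "x \<in> car P"
  obtains C where "is_chain P C" "\<forall>c\<in>C. leq P c x" "card C = rk P x + 1"
proof -
  let ?S = "{card C | C. is_chain P C \<and> (\<forall>c\<in>C. leq P c x)}"
  have "leq P x x" using leq_refl[OF po x] .
  then have "is_chain P {x}" using x by (simp add: is_chain_def)
  then have "card {x} \<in> ?S" using \<open>leq P x x\<close> by blast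
  then have "Max ?S \<in> ?S" "1 \<le> Max ?S"
    using Max_in[OF finite_chain_cards[OF fin]] Max_ge[OF finite_chain_cards[OF fin]] by force+
  then show ?thesis using that unfolding rk_def by auto
qed

lemma rk_less:
  assumes fin: "finite (car P)" and po: "partial_order_on' P"
    and x: "x \<in> car P" and y: "y \<in> car P" and "leq P x y" "x \<noteq> y"
  shows "rk P x < rk P y"
proof -
  obtain C where C: "is_chain P C" "\<forall>c\<in>C. leq P c x" "card C = rk P x + 1"
    using ex_chain_card_rk[OF fin po x] .
  have C_car: "C \<subseteq> car P" using C(1) by (simp add: is_chain_def)
  have "y \<notin> C" using C(2) C_car assms leq_antisym[OF po] by blast
  have below_y: "\<forall>c\<in>insert y C. leq P c y"
    using C(2) C_car assms leq_trans[OF po] leq_refl[OF po] by blast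
  then have "is_chain P (insert y C)"
    using C(1) y unfolding is_chain_def by auto
  then have "card (insert y C) \<le> rk P y + 1"
    using card_chain_le_rk[OF fin] below_y by blast
  moreover have "card (insert y C) = rk P x + 2"
    using \<open>y \<notin> C\<close> C(3) finite_subset[OF C_car fin] by simp
  ultimately show ?thesis by simp
qed

lemma rk_mono:
  "finite (car P) \<Longrightarrow> partial_order_on' P \<Longrightarrow> x \<in> car P \<Longrightarrow> y \<in> car P \<Longrightarrow> leq P x y \<Longrightarrow>
    rk P x \<le> rk P y"
  using rk_less[of P x y] by fastforce

lemma rk_le_of_strict_mono:
  assumes fin: "finite (car P)" and po: "partial_order_on' P" and x: "x \<in> car P"
    and strict: "\<And>p q. p \<in> car P \<Longrightarrow> q \<in> car P \<Longrightarrow> leq P p q \<Longrightarrow> p \<noteq> q \<Longrightarrow> \<phi> p < \<phi> q"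
  shows "rk P x \<le> \<phi> x"
proof -
  obtain C where C: "is_chain P C" "\<forall>c\<in>C. leq P c x" "card C = rk P x + 1"
    using ex_chain_card_rk[OF fin po x] .
  have C_car: "C \<subseteq> car P" using C(1) by (simp add: is_chain_def)
  have "inj_on \<phi> C"
  proof (rule inj_onI)
    fix p q assume "p \<in> C" "q \<in> C" "\<phi> p = \<phi> q"
    then show "p = q"
      using C(1) C_car strict[of p q] strict[of q p] unfolding is_chain_def by fastforce
  qed
  moreover have "\<phi> ` C \<subseteq> {..\<phi> x}"
    using C(2) C_car x strict by (fastforce simp: less_imp_le)
  ultimately have "card C \<le> card {..\<phi> x}"
    by (metis card_image card_mono finite_atMost)
  then show ?thesis using C(3) by simp
qed

subsection \<open>Finite lattices\<close>

context
  fixes P :: "'a poset"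
  assumes P: "finite_lattice P"
begin

private lemma po: "partial_order_on' P"
  using P by (rule finite_lattice_partial_order)

private lemma fin: "finite (car P)"
  using P by (rule finite_lattice_finite)

lemma meet_glb: "x \<in> car P \<Longrightarrow> y \<in> car P \<Longrightarrow> is_glb P {x, y} (meet P x y)"
  using P meet_eqI[OF po] unfolding finite_lattice_def by metis

lemma join_lub: "x \<in> car P \<Longrightarrow> y \<in> car P \<Longrightarrow> is_lub P {x, y} (join P x y)"
  using P join_eqI[OF po] unfolding finite_lattice_def by metis

lemma
  assumes "x \<in> car P" "y \<in> car P"
  shows meet_closed: "meet P x y \<in> car P"
    and meet_le1: "leq P (meet P x y) x"
    and meet_le2: "leq P (meet P x y) y"
    and meet_greatest: "\<And>z. z \<in> car P \<Longrightarrow> leq P z x \<Longrightarrow> leq P z y \<Longrightarrow> leq P z (meet P x y)"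
  using meet_glb[OF assms] unfolding is_glb_def by auto

lemma
  assumes "x \<in> car P" "y \<in> car P"
  shows join_closed: "join P x y \<in> car P"
    and join_ge1: "leq P x (join P x y)"
    and join_ge2: "leq P y (join P x y)"
    and join_least: "\<And>z. z \<in> car P \<Longrightarrow> leq P x z \<Longrightarrow> leq P y z \<Longrightarrow> leq P (join P x y) z"
  using join_lub[OF assms] unfolding is_lub_def by auto

lemma meet_absorb1: "x \<in> car P \<Longrightarrow> y \<in> car P \<Longrightarrow> leq P x y \<Longrightarrow> meet P x y = x"
  by (rule meet_eqI[OF po]) (auto simp: is_glb_def leq_refl[OF po])

lemma meet_absorb2: "x \<in> car P \<Longrightarrow> y \<in> car P \<Longrightarrow> leq P y x \<Longrightarrow> meet P x y = y"
  using meet_absorb1 meet_comm by metis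

lemma meet_meet_of_le:
  assumes x: "x \<in> car P" and y: "y \<in> car P" and z: "z \<in> car P" and "leq P z x"
  shows "meet P (meet P x y) z = meet P y z"
proof (rule meet_eqI[OF po])
  have "leq P (meet P y z) x"
    using leq_trans[OF po meet_closed[OF y z] z x] meet_le2[OF y z] assms(4) by blast
  then have "leq P (meet P y z) (meet P x y)"
    using meet_greatest[OF x y meet_closed[OF y z]] meet_le1[OF y z] by blast
  moreover have "leq P w (meet P y z)" if "w \<in> car P" "leq P w (meet P x y)" "leq P w z" for w
    using that meet_greatest[OF y z] leq_trans[OF po _ meet_closed[OF x y] y] meet_le2[OF x y] by blast
  ultimately show "is_glb P {meet P x y, z} (meet P y z)"
    unfolding is_glb_def using meet_closed[OF y z] meet_le2[OF y z] by auto
qed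

lemma meet_eq_of_between:
  assumes m: "m \<in> car P" and y: "y \<in> car P" and z: "z \<in> car P" and w: "w \<in> car P"
    and "leq P m y" "leq P y z" and mz: "meet P z w = m"
  shows "meet P y w = m"
proof (rule leq_antisym[OF po meet_closed[OF y w] m])
  have "leq P (meet P y w) z"
    using leq_trans[OF po meet_closed[OF y w] y z] meet_le1[OF y w] assms(6) by blast
  then show "leq P (meet P y w) m"
    using meet_greatest[OF z w meet_closed[OF y w]] meet_le2[OF y w] mz by blast
  show "leq P m (meet P y w)"
    using meet_greatest[OF y w m] assms(5) meet_le2[OF z w] mz by blast
qed

lemma ex_least: "\<exists>b\<in>car P. \<forall>x\<in>car P. leq P b x"
proof -
  have ranks: "finite (rk P ` car P)" "rk P ` car P \<noteq> {}"
    using P fin by (simp_all add: finite_lattice_def)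
  from Min_in[OF ranks] obtain b where "Min (rk P ` car P) = rk P b" and b: "b \<in> car P"
    by (rule imageE)
  then have b_min: "\<And>x. x \<in> car P \<Longrightarrow> rk P b \<le> rk P x"
    using Min_le[OF ranks(1)] by (metis image_eqI)
  have "leq P b x" if x: "x \<in> car P" for x
  proof -
    have "\<not> rk P (meet P b x) < rk P b"
      using b_min[OF meet_closed[OF b x]] by simp
    then have "meet P b x = b"
      using rk_less[OF fin po meet_closed[OF b x] b meet_le1[OF b x]] by blast
    then show ?thesis using meet_le2[OF b x] by simp
  qed
  with b show ?thesis by blast
qed

lemma ex_greatest: "\<exists>t\<in>car P. \<forall>x\<in>car P. leq P x t"
proof -
  have ranks: "finite (rk P ` car P)" "rk P ` car P \<noteq> {}"
    using P fin by (simp_all add: finite_lattice_def)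
  from Max_in[OF ranks] obtain t where "Max (rk P ` car P) = rk P t" and t: "t \<in> car P"
    by (rule imageE)
  then have t_max: "\<And>x. x \<in> car P \<Longrightarrow> rk P x \<le> rk P t"
    using Max_ge[OF ranks(1)] by (metis image_eqI)
  have "leq P x t" if x: "x \<in> car P" for x
  proof -
    have "\<not> rk P t < rk P (join P t x)"
      using t_max[OF join_closed[OF t x]] by simp
    then have "join P t x = t"
      using rk_less[OF fin po t join_closed[OF t x] join_ge1[OF t x]] by metis
    then show ?thesis using join_ge2[OF t x] by simp
  qed
  with t show ?thesis by blast
qed

lemma bot_closed: "bot P \<in> car P" and bot_least: "x \<in> car P \<Longrightarrow> leq P (bot P) x"
proof -
  obtain b where b: "b \<in> car P" "\<forall>x\<in>car P. leq P b x" using ex_least by blast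
  have "bot P = b" unfolding bot_def
    by (rule the_equality) (use b leq_antisym[OF po] in blast)+
  with b show "bot P \<in> car P" "x \<in> car P \<Longrightarrow> leq P (bot P) x" by auto
qed

lemma top_closed: "top P \<in> car P" and top_greatest: "x \<in> car P \<Longrightarrow> leq P x (top P)"
proof -
  obtain t where t: "t \<in> car P" "\<forall>x\<in>car P. leq P x t" using ex_greatest by blast
  have "top P = t" unfolding top_def
    by (rule the_equality) (use t leq_antisym[OF po] in blast)+
  with t show "top P \<in> car P" "x \<in> car P \<Longrightarrow> leq P x (top P)" by auto
qed

end

subsection \<open>Saturated chains\<close>

lemma ex_covers_le:
  assumes fin: "finite (car P)" and po: "partial_order_on' P"
    and a: "a \<in> car P" and b: "b \<in> car P" and "leq P a b" "a \<noteq> b"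
  obtains c where "covers P a c" "leq P c b"
proof -
  define S where "S = {z \<in> car P. leq P a z \<and> leq P z b \<and> z \<noteq> a}"
  have "b \<in> S" using assms leq_refl[OF po b] by (simp add: S_def)
  then obtain c where c: "c \<in> S" and c_min: "\<And>z. z \<in> S \<Longrightarrow> rk P c \<le> rk P z"
    using ex_has_least_nat[of "\<lambda>z. z \<in> S" b "rk P"] by blast
  have c_props: "c \<in> car P" "leq P a c" "leq P c b" "c \<noteq> a" using c by (auto simp: S_def)
  have "z \<in> S" if "z \<in> car P" "leq P a z" "leq P z c" "z \<noteq> a" for z
    using that leq_trans[OF po _ c_props(1) b] c_props by (simp add: S_def)
  then have "\<not> (\<exists>z\<in>car P. leq P a z \<and> leq P z c \<and> z \<noteq> a \<and> z \<noteq> c)"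
    using c_min rk_less[OF fin po _ c_props(1)] by (meson leD)
  then have "covers P a c" using a c_props by (simp add: covers_def)
  then show thesis using c_props(3) by (rule that)
qed

lemma ex_chain_between:
  assumes fin: "finite (car P)" and po: "partial_order_on' P" and rkd: "ranked P"
    and a: "a \<in> car P" and b: "b \<in> car P" and ab: "leq P a b"
  shows "\<exists>C. is_chain P C \<and> (\<forall>c\<in>C. leq P a c \<and> c \<noteq> a \<and> leq P c b) \<and>
    card C = rk P b - rk P a"
  using a ab
proof (induction "rk P b - rk P a" arbitrary: a rule: less_induct)
  case less
  show ?case
  proof (cases "a = b")
    case True
    then show ?thesis by (intro exI[of _ "{}"]) (simp add: is_chain_def)
  next
    case False
    obtain c where c: "covers P a c" "leq P c b"
      using ex_covers_le[OF fin po less.prems(1) b less.prems(2) False] .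
    then have c_props: "c \<in> car P" "leq P a c" "c \<noteq> a" and rk_c: "rk P c = rk P a + 1"
      using rkd unfolding covers_def ranked_def by blast+
    have "rk P c \<le> rk P b" using rk_mono[OF fin po c_props(1) b c(2)] .
    then have "rk P b - rk P c < rk P b - rk P a" using rk_c by linarith
    then obtain C where C: "is_chain P C" "\<forall>z\<in>C. leq P c z \<and> z \<noteq> c \<and> leq P z b"
        "card C = rk P b - rk P c"
      using less.hyps c_props(1) c(2) by blast
    have C_car: "C \<subseteq> car P" using C(1) by (simp add: is_chain_def)
    have above_a: "leq P a z \<and> z \<noteq> a" if "z \<in> C" for z
      using that C(2) C_car c_props leq_trans[OF po less.prems(1) c_props(1)]
        leq_antisym[OF po c_props(1) less.prems(1)] by blast
    show ?thesis
    proof (intro exI[of _ "insert c C"] conjI)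
      show "is_chain P (insert c C)"
        using C(1,2) c_props leq_refl[OF po] unfolding is_chain_def by auto
      show "\<forall>z\<in>insert c C. leq P a z \<and> z \<noteq> a \<and> leq P z b"
        using above_a C(2) c_props c(2) by blast
      show "card (insert c C) = rk P b - rk P a"
        using C(2,3) finite_subset[OF C_car fin] rk_c \<open>rk P c \<le> rk P b\<close> by auto
    qed
  qed
qed

text \<open>The image of a saturated chain of \<open>[u, v]\<close> is stacked on a longest chain below \<open>f u\<close>.\<close>

lemma rk_ge_interval_embedding:
  assumes fin: "finite (car P)" and po: "partial_order_on' P"
    and Q: "finite_lattice Q" "ranked Q" and u: "u \<in> car Q" and v: "v \<in> car Q" "leq Q u v"
    and f_closed: "\<And>z. z \<in> car Q \<Longrightarrow> leq Q u z \<Longrightarrow> leq Q z v \<Longrightarrow> f z \<in> car P"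
    and f_mono: "\<And>z z'. z \<in> car Q \<Longrightarrow> z' \<in> car Q \<Longrightarrow> leq Q u z \<Longrightarrow> leq Q z' v \<Longrightarrow>
      leq Q z z' \<Longrightarrow> leq P (f z) (f z')"
    and f_inj: "inj_on f {z \<in> car Q. leq Q u z \<and> leq Q z v}"
  shows "rk P (f u) + (rk Q v - rk Q u) \<le> rk P (f v)"
proof -
  note poQ = finite_lattice_partial_order[OF Q(1)]
  have uu: "leq Q u u" and vv: "leq Q v v" using leq_refl[OF poQ] u v by blast+
  have fu: "f u \<in> car P" using f_closed[OF u uu v(2)] .
  have fv: "f v \<in> car P" using f_closed[OF v(1,2) vv] .
  obtain C0 where C0: "is_chain P C0" "\<forall>c\<in>C0. leq P c (f u)" "card C0 = rk P (f u) + 1"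
    using ex_chain_card_rk[OF fin po fu] .
  obtain C where C: "is_chain Q C" "\<forall>c\<in>C. leq Q u c \<and> c \<noteq> u \<and> leq Q c v"
    "card C = rk Q v - rk Q u"
    using ex_chain_between[OF finite_lattice_finite[OF Q(1)] poQ Q(2) u v] by blast
  have C_car: "C \<subseteq> car Q" and C0_car: "C0 \<subseteq> car P"
    using C(1) C0(1) by (simp_all add: is_chain_def)
  have C_interval: "C \<subseteq> {z \<in> car Q. leq Q u z \<and> leq Q z v}" using C(2) C_car by blast
  have fC_car: "f ` C \<subseteq> car P" using f_closed C(2) C_car by blast
  have above_fu: "leq P (f u) (f c) \<and> f c \<noteq> f u" if "c \<in> C" for c
    using that C(2) C_car f_mono[OF u _ uu] inj_onD[OF f_inj] u uu v(2) by blast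
  have "is_chain P (f ` C)"
    using is_chain_image[OF C(1) fC_car] f_mono C(2) C_car by blast
  moreover have "\<forall>p\<in>C0. \<forall>q\<in>f ` C. leq P p q"
    using C0(2) C0_car above_fu fu fC_car leq_trans[OF po] by blast
  ultimately have "is_chain P (C0 \<union> f ` C)"
    by (rule is_chain_Un[OF C0(1)])
  moreover have "\<forall>c\<in>C0 \<union> f ` C. leq P c (f v)"
    using C0(2) C0_car fu fv f_mono[OF u v(1) uu vv v(2)] f_mono[OF _ v(1) _ vv] C(2) C_car
      fC_car leq_trans[OF po _ fu fv] by blast
  ultimately have "card (C0 \<union> f ` C) \<le> rk P (f v) + 1"
    by (rule card_chain_le_rk[OF fin])
  moreover have "C0 \<inter> f ` C = {}"
    using above_fu C0(2) C0_car fC_car leq_antisym[OF po _ fu] by blast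
  moreover have "card (f ` C) = card C"
    using card_image inj_on_subset[OF f_inj C_interval] by blast
  ultimately show ?thesis
    using C(3) C0(3) finite_subset[OF C0_car fin] finite_subset[OF fC_car fin]
    by (simp add: card_Un_disjoint)
qed

subsection \<open>Modular extensions\<close>

lemma modular_extension_finite_lattice: "modular_extension L E \<iota> \<Longrightarrow> finite_lattice E"
  by (simp add: modular_extension_def geometric_lattice_def)

lemma modular_extension_ranked: "modular_extension L E \<iota> \<Longrightarrow> ranked E"
  by (simp add: modular_extension_def geometric_lattice_def)

lemma modular_extension_inj: "modular_extension L E \<iota> \<Longrightarrow> inj_on \<iota> (car L)"
  by (simp add: modular_extension_def embedding_def)

lemma modular_extension_closed: "modular_extension L E \<iota> \<Longrightarrow> x \<in> car L \<Longrightarrow> \<iota> x \<in> car E"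
  by (auto simp: modular_extension_def embedding_def)

lemma modular_extension_leq_iff:
  assumes L: "finite_lattice L" and ext: "modular_extension L E \<iota>"
    and x: "x \<in> car L" and y: "y \<in> car L"
  shows "leq E (\<iota> x) (\<iota> y) \<longleftrightarrow> leq L x y"
proof
  show "leq L x y \<Longrightarrow> leq E (\<iota> x) (\<iota> y)"
    using ext x y by (simp add: modular_extension_def embedding_def)
next
  assume le: "leq E (\<iota> x) (\<iota> y)"
  note E = modular_extension_finite_lattice[OF ext]
  have ix: "\<iota> x \<in> car E" and iy: "\<iota> y \<in> car E"
    using modular_extension_closed[OF ext] x y by blast+
  have "\<iota> (join L x y) = join E (\<iota> x) (\<iota> y)"
    using ext x y by (simp add: modular_extension_def embedding_def)
  also have "\<dots> = \<iota> y"
    using le ix iy leq_refl[OF finite_lattice_partial_order[OF E]]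
    by (intro join_eqI[OF finite_lattice_partial_order[OF E]]) (auto simp: is_lub_def)
  finally have "join L x y = y"
    using inj_onD[OF modular_extension_inj[OF ext]] join_closed[OF L x y] y by blast
  then show "leq L x y" using join_ge1[OF L x y] by simp
qed

lemma modular_extension_Fi:
  assumes L: "finite_lattice L" and ext: "modular_extension L E \<iota>"
  shows modular_extension_image: "\<iota> ` car L = {G \<in> car E. leq E G (Fi L \<iota>)}"
    and modular_extension_Fi_modular: "modular_flat E (Fi L \<iota>)"
proof -
  note E = modular_extension_finite_lattice[OF ext]
  note po = finite_lattice_partial_order[OF E]
  obtain F where F: "F \<in> car E" "modular_flat E F"
    and image: "\<iota> ` car L = {G \<in> car E. leq E (bot E) G \<and> leq E G F}"
    using ext unfolding modular_extension_def by blast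
  have image': "\<iota> ` car L = {G \<in> car E. leq E G F}"
    unfolding image using bot_least[OF E] by auto
  have "F \<in> \<iota> ` car L"
    unfolding image' using F(1) leq_refl[OF po F(1)] by simp
  then obtain x where x: "x \<in> car L" "F = \<iota> x" by blast
  have "\<iota> (top L) \<in> car E" "leq E (\<iota> (top L)) F"
    using image' top_closed[OF L] by blast+
  moreover have "leq E F (\<iota> (top L))"
    using modular_extension_leq_iff[OF L ext x(1) top_closed[OF L]] top_greatest[OF L x(1)] x(2)
    by blast
  ultimately have "Fi L \<iota> = F"
    unfolding Fi_def using leq_antisym[OF po _ F(1)] by blast
  with image' F(2) show "\<iota> ` car L = {G \<in> car E. leq E G (Fi L \<iota>)}" "modular_flat E (Fi L \<iota>)"
    by simp_all
qed

lemma modular_extension_Fi_closed: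
  "finite_lattice L \<Longrightarrow> modular_extension L E \<iota> \<Longrightarrow> Fi L \<iota> \<in> car E"
  using modular_extension_Fi_modular unfolding modular_flat_def by blast

lemma modular_extension_inv_into:
  assumes "finite_lattice L" "modular_extension L E \<iota>"
    and "G \<in> car E" "leq E G (Fi L \<iota>)"
  shows "inv_into (car L) \<iota> G \<in> car L" "\<iota> (inv_into (car L) \<iota> G) = G"
proof -
  have "G \<in> \<iota> ` car L"
    using modular_extension_image[OF assms(1,2)] assms(3,4) by simp
  then show "inv_into (car L) \<iota> G \<in> car L" "\<iota> (inv_into (car L) \<iota> G) = G"
    by (simp_all add: inv_into_into f_inv_into_f)
qed

subsection \<open>The pushout of two modular extensions\<close>

locale modular_pushout =
  fixes L :: "'l poset" and E1 :: "'a poset" and \<iota>1 :: "'l \<Rightarrow> 'a"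
    and E2 :: "'b poset" and \<iota>2 :: "'l \<Rightarrow> 'b"
  assumes L: "finite_lattice L"
    and ext1: "modular_extension L E1 \<iota>1" and ext2: "modular_extension L E2 \<iota>2"
begin

abbreviation "P \<equiv> pushout L E1 \<iota>1 E2 \<iota>2"
abbreviation "F1 \<equiv> Fi L \<iota>1"
abbreviation "F2 \<equiv> Fi L \<iota>2"

lemmas E1 = modular_extension_finite_lattice[OF ext1]
lemmas E2 = modular_extension_finite_lattice[OF ext2]
lemmas po1 = finite_lattice_partial_order[OF E1]
lemmas po2 = finite_lattice_partial_order[OF E2]
lemmas F1_closed = modular_extension_Fi_closed[OF L ext1]
lemmas F2_closed = modular_extension_Fi_closed[OF L ext2]

lemma mem_pushout_iff:
  "(A, B) \<in> car P \<longleftrightarrow> A \<in> car E1 \<and> B \<in> car E2 \<and>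
    (\<exists>l\<in>car L. meet E1 A F1 = \<iota>1 l \<and> meet E2 B F2 = \<iota>2 l)"
proof (cases "A \<in> car E1 \<and> B \<in> car E2")
  case True
  then have A: "A \<in> car E1" and B: "B \<in> car E2" by simp_all
  note inv1 = modular_extension_inv_into[OF L ext1 meet_closed[OF E1 A F1_closed]
      meet_le2[OF E1 A F1_closed]]
  note inv2 = modular_extension_inv_into[OF L ext2 meet_closed[OF E2 B F2_closed]
      meet_le2[OF E2 B F2_closed]]
  have "inv_into (car L) \<iota>1 (meet E1 A F1) = inv_into (car L) \<iota>2 (meet E2 B F2) \<longleftrightarrow>
    (\<exists>l\<in>car L. meet E1 A F1 = \<iota>1 l \<and> meet E2 B F2 = \<iota>2 l)"
  proof
    assume "inv_into (car L) \<iota>1 (meet E1 A F1) = inv_into (car L) \<iota>2 (meet E2 B F2)"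
    then show "\<exists>l\<in>car L. meet E1 A F1 = \<iota>1 l \<and> meet E2 B F2 = \<iota>2 l"
      using inv1 inv2 by metis
  next
    assume "\<exists>l\<in>car L. meet E1 A F1 = \<iota>1 l \<and> meet E2 B F2 = \<iota>2 l"
    then show "inv_into (car L) \<iota>1 (meet E1 A F1) = inv_into (car L) \<iota>2 (meet E2 B F2)"
      using inv_into_f_f[OF modular_extension_inj[OF ext1]]
        inv_into_f_f[OF modular_extension_inj[OF ext2]] by metis
  qed
  with True show ?thesis by (simp add: pushout_def car_def)
qed (auto simp: pushout_def car_def)

lemma leq_pushout: "leq P (A, B) (A', B') \<longleftrightarrow> leq E1 A A' \<and> leq E2 B B'"
  by (simp add: pushout_def leq_def)

lemma car_pushout_subset: "car P \<subseteq> car E1 \<times> car E2"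
  using mem_pushout_iff by auto

lemma finite_pushout: "finite (car P)"
  using finite_subset[OF car_pushout_subset] finite_lattice_finite[OF E1]
    finite_lattice_finite[OF E2] by blast

lemma partial_order_pushout: "partial_order_on' P"
  unfolding partial_order_on'_def
proof (intro conjI ballI impI)
  fix p q r assume p: "p \<in> car P" and q: "q \<in> car P" and r: "r \<in> car P"
  obtain A B A' B' A'' B'' where pqr: "p = (A, B)" "q = (A', B')" "r = (A'', B'')"
    by (cases p, cases q, cases r) blast
  have AB: "A \<in> car E1" "B \<in> car E2" "A' \<in> car E1" "B' \<in> car E2" "A'' \<in> car E1" "B'' \<in> car E2"
    using p q r car_pushout_subset unfolding pqr by blast+
  show "leq P p p"
    unfolding pqr leq_pushout using AB leq_refl[OF po1] leq_refl[OF po2] by blast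
  show "p = q" if "leq P p q \<and> leq P q p"
    using that AB leq_antisym[OF po1] leq_antisym[OF po2] unfolding pqr leq_pushout by blast
  show "leq P p r" if "leq P p q \<and> leq P q r"
    using that AB leq_trans[OF po1] leq_trans[OF po2] unfolding pqr leq_pushout by blast
qed

lemma mem_pushout_upper:
  assumes A: "A \<in> car E1" and "leq E1 F1 A"
  shows "(A, top E2) \<in> car P"
proof -
  have "meet E1 A F1 = \<iota>1 (top L)"
    using meet_absorb2[OF E1 A F1_closed] assms(2) by (simp add: Fi_def)
  moreover have "meet E2 (top E2) F2 = \<iota>2 (top L)"
    using meet_absorb2[OF E2 top_closed[OF E2] F2_closed] top_greatest[OF E2 F2_closed]
    by (simp add: Fi_def)
  ultimately show ?thesis
    using A top_closed[OF E2] top_closed[OF L] by (auto simp: mem_pushout_iff)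
qed

lemma mem_pushout_diagonal:
  assumes l: "l \<in> car L"
  shows "(\<iota>1 l, \<iota>2 l) \<in> car P"
proof -
  have "\<iota>1 l \<in> car E1" "leq E1 (\<iota>1 l) F1" "\<iota>2 l \<in> car E2" "leq E2 (\<iota>2 l) F2"
    using l modular_extension_image[OF L ext1] modular_extension_image[OF L ext2] by blast+
  then show ?thesis
    using l meet_absorb1[OF E1 _ F1_closed] meet_absorb1[OF E2 _ F2_closed]
    by (auto simp: mem_pushout_iff)
qed

lemma mem_pushout_between1:
  assumes AB: "(A, B) \<in> car P" and z: "z \<in> car E1"
    and "leq E1 (meet E1 A F1) z" "leq E1 z A"
  shows "(z, B) \<in> car P"
proof -
  have A: "A \<in> car E1" using AB car_pushout_subset by blast
  have "meet E1 z F1 = meet E1 A F1"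
    using meet_eq_of_between[OF E1 meet_closed[OF E1 A F1_closed] z A F1_closed] assms(3,4)
    by blast
  then show ?thesis using AB z by (simp add: mem_pushout_iff)
qed

lemma mem_pushout_between2:
  assumes AB: "(A, B) \<in> car P" and y: "y \<in> car E2"
    and "leq E2 (meet E2 B F2) y" "leq E2 y B"
  shows "(A, y) \<in> car P"
proof -
  have B: "B \<in> car E2" using AB car_pushout_subset by blast
  have "meet E2 y F2 = meet E2 B F2"
    using meet_eq_of_between[OF E2 meet_closed[OF E2 B F2_closed] y B F2_closed] assms(3,4)
    by blast
  then show ?thesis using AB y by (simp add: mem_pushout_iff)
qed

lemma meet_F1_eq_of_mem_pushout:
  assumes "(A, B) \<in> car P" "(A', B) \<in> car P"
  shows "meet E1 A F1 = meet E1 A' F1"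
proof -
  obtain l l' where "l \<in> car L" "l' \<in> car L" "meet E1 A F1 = \<iota>1 l" "meet E1 A' F1 = \<iota>1 l'"
    "\<iota>2 l = \<iota>2 l'"
    using assms by (auto simp: mem_pushout_iff)
  then show ?thesis using inj_onD[OF modular_extension_inj[OF ext2]] by metis
qed

text \<open>By modularity of \<open>F1\<close>, \<open>rk A - rk (A \<and> F1) = rk (F1 \<or> A) - rk F1\<close>, which is monotone.\<close>

lemma rk_minus_rk_meet_F1_mono:
  assumes A: "A \<in> car E1" and A': "A' \<in> car E1" and "leq E1 A A'"
  shows "rk E1 A - rk E1 (meet E1 A F1) \<le> rk E1 A' - rk E1 (meet E1 A' F1)"
proof -
  have modular: "rk E1 (meet E1 G F1) + rk E1 (join E1 F1 G) = rk E1 F1 + rk E1 G"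
    if "G \<in> car E1" for G
    using modular_extension_Fi_modular[OF L ext1] that meet_comm
    unfolding modular_flat_def by metis
  have "leq E1 A (join E1 F1 A')"
    using leq_trans[OF po1 A A' join_closed[OF E1 F1_closed A']] assms(3)
      join_ge2[OF E1 F1_closed A'] by blast
  then have "leq E1 (join E1 F1 A) (join E1 F1 A')"
    using join_least[OF E1 F1_closed A join_closed[OF E1 F1_closed A']]
      join_ge1[OF E1 F1_closed A'] by blast
  then have "rk E1 (join E1 F1 A) \<le> rk E1 (join E1 F1 A')"
    using rk_mono[OF finite_lattice_finite[OF E1] po1 join_closed[OF E1 F1_closed A]
        join_closed[OF E1 F1_closed A']] by blast
  then show ?thesis using modular[OF A] modular[OF A'] by linarith
qed

text \<open>The rank \<open>rk A + rk B - rk\<^sub>L (trace)\<close> of the pushout, with the rank of the trace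
  \<open>A \<and> F1\<close> measured in \<open>E1\<close>.\<close>

definition rank_formula :: "'a \<times> 'b \<Rightarrow> nat" where
  "rank_formula = (\<lambda>(A, B). rk E1 A - rk E1 (meet E1 A F1) + rk E2 B)"

lemma rank_formula_strict_mono:
  assumes p: "p \<in> car P" and q: "q \<in> car P" and "leq P p q" "p \<noteq> q"
  shows "rank_formula p < rank_formula q"
proof -
  obtain A B A' B' where pq: "p = (A, B)" "q = (A', B')" by (cases p, cases q) blast
  have AB: "A \<in> car E1" "B \<in> car E2" "A' \<in> car E1" "B' \<in> car E2"
    using p q car_pushout_subset unfolding pq by blast+
  have le: "leq E1 A A'" "leq E2 B B'" using assms(3) unfolding pq leq_pushout by blast+
  note part1 = rk_minus_rk_meet_F1_mono[OF AB(1,3) le(1)]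
  show ?thesis
  proof (cases "B = B'")
    case True
    then have "meet E1 A F1 = meet E1 A' F1"
      using meet_F1_eq_of_mem_pushout p q unfolding pq by blast
    moreover have "rk E1 A < rk E1 A'"
      using rk_less[OF finite_lattice_finite[OF E1] po1 AB(1,3) le(1)] assms(4) True
      unfolding pq by blast
    moreover have "rk E1 (meet E1 A F1) \<le> rk E1 A"
      using rk_mono[OF finite_lattice_finite[OF E1] po1 meet_closed[OF E1 AB(1) F1_closed] AB(1)]
        meet_le1[OF E1 AB(1) F1_closed] by blast
    ultimately show ?thesis using True unfolding pq rank_formula_def by simp
  next
    case False
    then have "rk E2 B < rk E2 B'"
      using rk_less[OF finite_lattice_finite[OF E2] po2 AB(2,4) le(2)] by blast
    with part1 show ?thesis unfolding pq rank_formula_def by simp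
  qed
qed


text \<open>Flats below \<open>F2\<close> lift along the diagonal \<open>\<iota>1 \<circ> \<iota>2\<inverse>\<close> into the pushout.\<close>

lemma rk_pushout_diagonal_ge:
  assumes l: "l \<in> car L"
  shows "rk E2 (\<iota>2 l) \<le> rk P (\<iota>1 l, \<iota>2 l)"
proof -
  define b where "b = \<iota>2 l"
  have b: "b \<in> car E2" "leq E2 b F2"
    using l modular_extension_image[OF L ext2] unfolding b_def by blast+
  define lift where "lift y = (\<iota>1 (inv_into (car L) \<iota>2 y), y)" for y
  have lift: "inv_into (car L) \<iota>2 y \<in> car L" "\<iota>2 (inv_into (car L) \<iota>2 y) = y"
    "lift y \<in> car P" if "y \<in> car E2" "leq E2 y b" for y
  proof -
    have "leq E2 y F2" using leq_trans[OF po2 that(1) b(1) F2_closed that(2) b(2)] .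
    from modular_extension_inv_into[OF L ext2 that(1) this]
    show "inv_into (car L) \<iota>2 y \<in> car L" "\<iota>2 (inv_into (car L) \<iota>2 y) = y" "lift y \<in> car P"
      using mem_pushout_diagonal unfolding lift_def by metis+
  qed
  have "rk P (lift (bot E2)) + (rk E2 b - rk E2 (bot E2)) \<le> rk P (lift b)"
  proof (rule rk_ge_interval_embedding[OF finite_pushout partial_order_pushout E2
        modular_extension_ranked[OF ext2] bot_closed[OF E2] b(1) bot_least[OF E2 b(1)]])
    show "lift y \<in> car P" if "y \<in> car E2" "leq E2 y b" for y
      using lift that by blast
    show "leq P (lift y) (lift y')"
      if "y \<in> car E2" "y' \<in> car E2" "leq E2 y' b" "leq E2 y y'" for y y'
    proof -
      have "leq E2 y b" using leq_trans[OF po2 that(1,2) b(1) that(4,3)] .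
      note y = lift[OF that(1) this] and y' = lift[OF that(2,3)]
      have "leq L (inv_into (car L) \<iota>2 y) (inv_into (car L) \<iota>2 y')"
        using modular_extension_leq_iff[OF L ext2 y(1) y'(1)] y(2) y'(2) that(4) by simp
      then have "leq E1 (\<iota>1 (inv_into (car L) \<iota>2 y)) (\<iota>1 (inv_into (car L) \<iota>2 y'))"
        using modular_extension_leq_iff[OF L ext1 y(1) y'(1)] by simp
      with that(4) show ?thesis by (simp add: lift_def leq_pushout)
    qed
  qed (simp add: inj_on_def lift_def)
  moreover have "lift b = (\<iota>1 l, \<iota>2 l)"
    using inv_into_f_f[OF modular_extension_inj[OF ext2] l] unfolding lift_def b_def by simp
  moreover have "rk E2 (bot E2) = 0"
    using modular_extension_ranked[OF ext2] by (simp add: ranked_def)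
  ultimately show ?thesis unfolding b_def by simp
qed

lemma rk_pushout:
  assumes AB: "(A, B) \<in> car P"
  shows "rk P (A, B) = rank_formula (A, B)"
proof (rule antisym)
  show "rk P (A, B) \<le> rank_formula (A, B)"
    using rk_le_of_strict_mono[OF finite_pushout partial_order_pushout AB]
      rank_formula_strict_mono by blast
next
  have A: "A \<in> car E1" and B: "B \<in> car E2" using AB car_pushout_subset by blast+
  define a where "a = meet E1 A F1"
  define b where "b = meet E2 B F2"
  obtain l where l: "l \<in> car L" "\<iota>1 l = a" "\<iota>2 l = b"
    using AB unfolding mem_pushout_iff a_def b_def by auto
  have a: "a \<in> car E1" "leq E1 a A"
    unfolding a_def using meet_closed[OF E1 A F1_closed] meet_le1[OF E1 A F1_closed] .
  have b: "b \<in> car E2" "leq E2 b B"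
    unfolding b_def using meet_closed[OF E2 B F2_closed] meet_le1[OF E2 B F2_closed] .
  have aB: "(a, B) \<in> car P"
    using mem_pushout_between1[OF AB a(1) _ a(2)] leq_refl[OF po1 a(1)] unfolding a_def by blast
  have "rk E2 b \<le> rk P (a, b)"
    using rk_pushout_diagonal_ge[OF l(1)] l(2,3) by simp
  moreover have "rk P (a, b) + (rk E2 B - rk E2 b) \<le> rk P (a, B)"
  proof (rule rk_ge_interval_embedding[where f = "\<lambda>y. (a, y)", OF finite_pushout
        partial_order_pushout E2 modular_extension_ranked[OF ext2] b(1) B b(2)])
    show "(a, y) \<in> car P" if "y \<in> car E2" "leq E2 b y" "leq E2 y B" for y
      using mem_pushout_between2[OF aB] that unfolding b_def by blast
    show "leq P (a, y) (a, y')" if "leq E2 y y'" for y y'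
      using that leq_refl[OF po1 a(1)] by (simp add: leq_pushout)
  qed (simp add: inj_on_def)
  moreover have "rk P (a, B) + (rk E1 A - rk E1 a) \<le> rk P (A, B)"
  proof (rule rk_ge_interval_embedding[where f = "\<lambda>z. (z, B)", OF finite_pushout
        partial_order_pushout E1 modular_extension_ranked[OF ext1] a(1) A a(2)])
    show "(z, B) \<in> car P" if "z \<in> car E1" "leq E1 a z" "leq E1 z A" for z
      using mem_pushout_between1[OF AB] that unfolding a_def by blast
    show "leq P (z, B) (z', B)" if "leq E1 z z'" for z z'
      using that leq_refl[OF po2 B] by (simp add: leq_pushout)
  qed (simp add: inj_on_def)
  moreover have "rk E2 b \<le> rk E2 B"
    using rk_mono[OF finite_lattice_finite[OF E2] po2 b(1) B b(2)] .
  ultimately show "rank_formula (A, B) \<le> rk P (A, B)"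
    unfolding rank_formula_def a_def by simp
qed

lemma mem_pushout_meet_upper:
  assumes F: "F \<in> car E1" "leq E1 F1 F" and G: "(G1, G2) \<in> car P"
  shows "(meet E1 F G1, G2) \<in> car P"
proof -
  have "G1 \<in> car E1" using G car_pushout_subset by blast
  then have "meet E1 (meet E1 F G1) F1 = meet E1 G1 F1" "meet E1 F G1 \<in> car E1"
    using meet_meet_of_le[OF E1 F(1) _ F1_closed F(2)] meet_closed[OF E1 F(1)] by blast+
  then show ?thesis using G by (simp add: mem_pushout_iff)
qed

lemma meet_pushout_upper:
  assumes F: "F \<in> car E1" "leq E1 F1 F" and G: "(G1, G2) \<in> car P"
  shows "meet P (F, top E2) (G1, G2) = (meet E1 F G1, G2)"
proof (rule meet_eqI[OF partial_order_pushout])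
  have G1: "G1 \<in> car E1" and G2: "G2 \<in> car E2" using G car_pushout_subset by blast+
  note FG = meet_closed[OF E1 F(1) G1] meet_le1[OF E1 F(1) G1] meet_le2[OF E1 F(1) G1]
  have "leq E1 H (meet E1 F G1)" if "H \<in> car E1" "leq E1 H F" "leq E1 H G1" for H
    using meet_greatest[OF E1 F(1) G1] that by blast
  with mem_pushout_meet_upper[OF F G]
  show "is_glb P {(F, top E2), (G1, G2)} (meet E1 F G1, G2)"
    using FG top_greatest[OF E2 G2] leq_refl[OF po2 G2] car_pushout_subset
    unfolding is_glb_def by (auto simp: leq_pushout)
qed

lemma join_pushout_upper:
  assumes F: "F \<in> car E1" "leq E1 F1 F" and G: "(G1, G2) \<in> car P"
  shows "join P (F, top E2) (G1, G2) = (join E1 F G1, top E2)"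
proof (rule join_eqI[OF partial_order_pushout])
  have G1: "G1 \<in> car E1" and G2: "G2 \<in> car E2" using G car_pushout_subset by blast+
  note FG = join_closed[OF E1 F(1) G1] join_ge1[OF E1 F(1) G1] join_ge2[OF E1 F(1) G1]
  have "leq E1 F1 (join E1 F G1)"
    using leq_trans[OF po1 F1_closed F(1) FG(1) F(2) FG(2)] .
  then have "(join E1 F G1, top E2) \<in> car P"
    using mem_pushout_upper[OF FG(1)] by blast
  moreover have "leq E1 (join E1 F G1) H" if "H \<in> car E1" "leq E1 F H" "leq E1 G1 H" for H
    using join_least[OF E1 F(1) G1] that by blast
  moreover have "leq E2 (top E2) H \<longleftrightarrow> H = top E2" if "H \<in> car E2" for H
    using that top_closed[OF E2] top_greatest[OF E2] leq_antisym[OF po2] leq_refl[OF po2] by metis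
  ultimately show "is_lub P {(F, top E2), (G1, G2)} (join E1 F G1, top E2)"
    using FG top_greatest[OF E2 G2] top_closed[OF E2] leq_refl[OF po2] car_pushout_subset
    unfolding is_lub_def by (auto simp: leq_pushout)
qed

lemma rk_pushout_upper:
  assumes A: "A \<in> car E1" "leq E1 F1 A"
  shows "rk P (A, top E2) = rk E1 A - rk E1 F1 + rk E2 (top E2)"
  using rk_pushout[OF mem_pushout_upper[OF A]] meet_absorb2[OF E1 A(1) F1_closed A(2)]
  by (simp add: rank_formula_def)

lemma modular_flat_pushout:
  assumes F: "F \<in> car E1" "leq E1 F1 F" and modular: "modular_flat E1 F"
  shows "modular_flat P (F, top E2)"
  unfolding modular_flat_def
proof (intro conjI ballI)
  show "(F, top E2) \<in> car P" using mem_pushout_upper[OF F] .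
  fix G assume "G \<in> car P"
  then obtain G1 G2 where G_eq: "G = (G1, G2)" and G: "(G1, G2) \<in> car P" by (cases G) blast
  have G1: "G1 \<in> car E1" using G car_pushout_subset by blast
  note FG = meet_closed[OF E1 F(1) G1] join_closed[OF E1 F(1) G1]
  note rk_mono1 = rk_mono[OF finite_lattice_finite[OF E1] po1]
  have F1_le_join: "leq E1 F1 (join E1 F G1)"
    using leq_trans[OF po1 F1_closed F(1) FG(2) F(2) join_ge1[OF E1 F(1) G1]] .
  have meet_F1: "meet E1 (meet E1 F G1) F1 = meet E1 G1 F1"
    using meet_meet_of_le[OF E1 F(1) G1 F1_closed F(2)] .
  have "rk P (meet P (F, top E2) G) = rk E1 (meet E1 F G1) - rk E1 (meet E1 G1 F1) + rk E2 G2"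
    using rk_pushout[OF mem_pushout_meet_upper[OF F G]] meet_F1
    unfolding G_eq meet_pushout_upper[OF F G] by (simp add: rank_formula_def)
  moreover have "rk P (join P (F, top E2) G) = rk E1 (join E1 F G1) - rk E1 F1 + rk E2 (top E2)"
    unfolding G_eq join_pushout_upper[OF F G] using rk_pushout_upper[OF FG(2) F1_le_join] .
  moreover have "rk P G = rk E1 G1 - rk E1 (meet E1 G1 F1) + rk E2 G2"
    unfolding G_eq using rk_pushout[OF G] by (simp add: rank_formula_def)
  moreover have "rk E1 (meet E1 G1 F1) \<le> rk E1 (meet E1 F G1)"
    using rk_mono1[OF meet_closed[OF E1 FG(1) F1_closed] FG(1) meet_le1[OF E1 FG(1) F1_closed]]
    unfolding meet_F1 .
  moreover have "rk E1 F1 \<le> rk E1 (join E1 F G1)"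
    using rk_mono1[OF F1_closed FG(2) F1_le_join] .
  moreover have "rk E1 (meet E1 G1 F1) \<le> rk E1 G1"
    using rk_mono1[OF meet_closed[OF E1 G1 F1_closed] G1 meet_le1[OF E1 G1 F1_closed]] .
  moreover have "rk E1 (meet E1 F G1) + rk E1 (join E1 F G1) = rk E1 F + rk E1 G1"
    using modular G1 unfolding modular_flat_def by blast
  ultimately show "rk P (meet P (F, top E2) G) + rk P (join P (F, top E2) G) =
      rk P (F, top E2) + rk P G"
    using rk_pushout_upper[OF F] rk_mono1[OF F1_closed F(1) F(2)] by linarith
qed

end

theorem lemma4:
  fixes L :: "'l poset" and E1 :: "'a poset" and E2 :: "'b poset"
    and \<iota>1 :: "'l \<Rightarrow> 'a" and \<iota>2 :: "'l \<Rightarrow> 'b" and F :: 'a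
  assumes "geometric_lattice L" and "nontrivial L"
    and "modular_extension L E1 \<iota>1" and "modular_extension L E2 \<iota>2"
    and "F \<in> car E1" and "leq E1 (Fi L \<iota>1) F"
    and "modular_flat E1 F"
  shows "modular_flat (pushout L E1 \<iota>1 E2 \<iota>2) (F, top E2)"
proof -
  have "finite_lattice L" using assms(1) by (simp add: geometric_lattice_def)
  then interpret modular_pushout L E1 \<iota>1 E2 \<iota>2
    using assms(3,4) by unfold_locales
  show ?thesis using modular_flat_pushout assms(5-7) by blast
qed

end
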